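(* Let $G=G_1\ast\cdots\ast G_k\ast F_N$ be a countable group ($F_N$ free of finite rank), $\mathcal{F}=\{[G_1],\dots,[G_k]\}$. Let $T$ be a minimal $(G,\mathcal{F})$-tree and $(T_n)_{n\in\mathbb{N}}$ a sequence of minimal $(G,\mathcal{F})$-trees converging to $T$ in the equivariant Gromov–Hausdorff topology. Let $g\in G$ and assume some power $g^p$ ($p\ge 1$) fixes a nondegenerate arc $I$ in $T$. If $g$ is hyperbolic in $T_n$ for all sufficiently large $n$, then $g$ fixes $I$.
   Context: Peripheral: conjugate into some $G_i$. $(G,\mathcal{F})$-tree: $\mathbb{R}$-tree with isometric $G$-action where every peripheral subgroup fixes a unique point; minimal: no proper nonempty invariant subtree. $g$ is hyperbolic if it fixes no point. Equivariant Gromov–Hausdorff convergence: for every finite $K\subset T$, finite $P\subset G$, $\epsilon>0$, for all large $n$ there are finite $K_n\subset T_n$ and $R\subseteq K\times K_n$ with surjective projections such that $|d_T(gx,hy)-d_{T_n}(gx',hy')|<\epsilon$ for all $(x,x'),(y,y')\in R$, $g,h\in P$. *)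

theory Defs
  imports "HOL-Analysis.Analysis" "HOL-Algebra.Algebra"
begin

definition fp_factor :: "('g, 'm) monoid_scheme \<Rightarrow> nat \<Rightarrow> (nat \<Rightarrow> 'g set) \<Rightarrow> (nat \<Rightarrow> 'g) \<Rightarrow> nat \<Rightarrow> 'g set"
  where "fp_factor G k Gs xs i = (if i < k then Gs i else generate G {xs (i - k)})"

definition word_prod :: "('g, 'm) monoid_scheme \<Rightarrow> (nat \<times> 'g) list \<Rightarrow> 'g"
  where "word_prod G ws = foldr (\<lambda>p acc. snd p \<otimes>\<^bsub>G\<^esub> acc) ws \<one>\<^bsub>G\<^esub>"

text \<open>Internal free product decomposition: G is generated by the factors, the free
  generators have infinite order (so their cyclic groups are copies of Z, whose
  free product is F_N), and every nonempty reduced alternating word has nontrivial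
  product (normal form theorem).\<close>
definition free_product_decomp ::
  "('g, 'm) monoid_scheme \<Rightarrow> nat \<Rightarrow> (nat \<Rightarrow> 'g set) \<Rightarrow> nat \<Rightarrow> (nat \<Rightarrow> 'g) \<Rightarrow> bool" where
  "free_product_decomp G k Gs N xs \<longleftrightarrow>
     group G \<and>
     (\<forall>i<k. subgroup (Gs i) G) \<and>
     (\<forall>j<N. xs j \<in> carrier G \<and> (\<forall>n::nat. n > 0 \<longrightarrow> xs j [^]\<^bsub>G\<^esub> n \<noteq> \<one>\<^bsub>G\<^esub>)) \<and>
     generate G (\<Union>i<k+N. fp_factor G k Gs xs i) = carrier G \<and>
     (\<forall>ws. ws \<noteq> [] \<longrightarrow>
        (\<forall>p\<in>set ws. fst p < k + N \<and> snd p \<in> fp_factor G k Gs xs (fst p) \<and> snd p \<noteq> \<one>\<^bsub>G\<^esub>) \<longrightarrow>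
        (\<forall>m. Suc m < length ws \<longrightarrow> fst (ws ! m) \<noteq> fst (ws ! Suc m)) \<longrightarrow>
        word_prod G ws \<noteq> \<one>\<^bsub>G\<^esub>)"

definition is_arc :: "'a set \<Rightarrow> ('a \<Rightarrow> 'a \<Rightarrow> real) \<Rightarrow> 'a \<Rightarrow> 'a \<Rightarrow> (real \<Rightarrow> 'a) \<Rightarrow> bool" where
  "is_arc T d x y al \<longleftrightarrow> pathin (Metric_space.mtopology T d) al \<and> inj_on al {0..1} \<and> al 0 = x \<and> al 1 = y"

definition is_geodesic :: "'a set \<Rightarrow> ('a \<Rightarrow> 'a \<Rightarrow> real) \<Rightarrow> 'a \<Rightarrow> 'a \<Rightarrow> (real \<Rightarrow> 'a) \<Rightarrow> bool" where
  "is_geodesic T d x y ga \<longleftrightarrow> ga ` {0..d x y} \<subseteq> T \<and> ga 0 = x \<and> ga (d x y) = y \<and>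
     (\<forall>s\<in>{0..d x y}. \<forall>t\<in>{0..d x y}. d (ga s) (ga t) = \<bar>s - t\<bar>)"

definition R_tree :: "'a set \<Rightarrow> ('a \<Rightarrow> 'a \<Rightarrow> real) \<Rightarrow> bool" where
  "R_tree T d \<longleftrightarrow> T \<noteq> {} \<and> Metric_space T d \<and>
     (\<forall>x\<in>T. \<forall>y\<in>T. \<exists>ga. is_geodesic T d x y ga \<and>
        (\<forall>al. is_arc T d x y al \<longrightarrow> al ` {0..1} = ga ` {0..d x y}))"

text \<open>Segment [a,b] in an R-tree (image of the geodesic from a to b).\<close>
definition seg :: "'a set \<Rightarrow> ('a \<Rightarrow> 'a \<Rightarrow> real) \<Rightarrow> 'a \<Rightarrow> 'a \<Rightarrow> 'a set" where
  "seg T d a b = {z \<in> T. d a z + d z b = d a b}"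

definition subtree :: "'a set \<Rightarrow> ('a \<Rightarrow> 'a \<Rightarrow> real) \<Rightarrow> 'a set \<Rightarrow> bool" where
  "subtree T d Y \<longleftrightarrow> Y \<noteq> {} \<and> Y \<subseteq> T \<and> (\<forall>a\<in>Y. \<forall>b\<in>Y. seg T d a b \<subseteq> Y)"

definition isometric_action ::
  "('g, 'm) monoid_scheme \<Rightarrow> 'a set \<Rightarrow> ('a \<Rightarrow> 'a \<Rightarrow> real) \<Rightarrow> ('g \<Rightarrow> 'a \<Rightarrow> 'a) \<Rightarrow> bool" where
  "isometric_action G T d act \<longleftrightarrow>
     (\<forall>g\<in>carrier G. \<forall>x\<in>T. act g x \<in> T) \<and>
     (\<forall>x\<in>T. act \<one>\<^bsub>G\<^esub> x = x) \<and>
     (\<forall>g\<in>carrier G. \<forall>h\<in>carrier G. \<forall>x\<in>T. act (g \<otimes>\<^bsub>G\<^esub> h) x = act g (act h x)) \<and>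
     (\<forall>g\<in>carrier G. \<forall>x\<in>T. \<forall>y\<in>T. d (act g x) (act g y) = d x y)"

definition GF_tree ::
  "('g, 'm) monoid_scheme \<Rightarrow> nat \<Rightarrow> (nat \<Rightarrow> 'g set) \<Rightarrow> 'a set \<Rightarrow> ('a \<Rightarrow> 'a \<Rightarrow> real) \<Rightarrow> ('g \<Rightarrow> 'a \<Rightarrow> 'a) \<Rightarrow> bool" where
  "GF_tree G k Gs T d act \<longleftrightarrow> R_tree T d \<and> isometric_action G T d act \<and>
     (\<forall>i<k. \<forall>c\<in>carrier G. \<exists>!x. x \<in> T \<and>
        (\<forall>h\<in>Gs i. act (c \<otimes>\<^bsub>G\<^esub> h \<otimes>\<^bsub>G\<^esub> inv\<^bsub>G\<^esub> c) x = x))"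

definition minimal_action ::
  "('g, 'm) monoid_scheme \<Rightarrow> 'a set \<Rightarrow> ('a \<Rightarrow> 'a \<Rightarrow> real) \<Rightarrow> ('g \<Rightarrow> 'a \<Rightarrow> 'a) \<Rightarrow> bool" where
  "minimal_action G T d act \<longleftrightarrow>
     (\<forall>Y. subtree T d Y \<and> (\<forall>g\<in>carrier G. act g ` Y \<subseteq> Y) \<longrightarrow> Y = T)"

definition hyperbolic :: "'a set \<Rightarrow> ('g \<Rightarrow> 'a \<Rightarrow> 'a) \<Rightarrow> 'g \<Rightarrow> bool" where
  "hyperbolic T act g \<longleftrightarrow> (\<forall>x\<in>T. act g x \<noteq> x)"

definition eqGH_converges ::
  "('g, 'm) monoid_scheme \<Rightarrow> (nat \<Rightarrow> 'b set) \<Rightarrow> (nat \<Rightarrow> 'b \<Rightarrow> 'b \<Rightarrow> real) \<Rightarrow> (nat \<Rightarrow> 'g \<Rightarrow> 'b \<Rightarrow> 'b)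
    \<Rightarrow> 'a set \<Rightarrow> ('a \<Rightarrow> 'a \<Rightarrow> real) \<Rightarrow> ('g \<Rightarrow> 'a \<Rightarrow> 'a) \<Rightarrow> bool" where
  "eqGH_converges G Tn dn actn T d act \<longleftrightarrow>
     (\<forall>K P \<epsilon>. finite K \<and> K \<subseteq> T \<and> finite P \<and> P \<subseteq> carrier G \<and> \<epsilon> > 0 \<longrightarrow>
       (\<forall>\<^sub>F n in sequentially. \<exists>Kn R. finite Kn \<and> Kn \<subseteq> Tn n \<and> R \<subseteq> K \<times> Kn \<and>
           fst ` R = K \<and> snd ` R = Kn \<and>
           (\<forall>(x, x')\<in>R. \<forall>(y, y')\<in>R. \<forall>g\<in>P. \<forall>h\<in>P.
              \<bar>d (act g x) (act h y) - dn n (actn n g x') (actn n h y')\<bar> < \<epsilon>)))"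

end

theory Submission
  imports Defs
begin

text \<open>If g is hyperbolic in T_n, then d(x', g x') \<le> d(x', g^p x') for every point x' of T_n: for a
  fixed-point-free isometry h of an \<real>-tree the displacements n \<mapsto> d(x', h^n x') increase strictly.
  This follows from the four-point condition, which in turn comes from the existence of tripods, i.e.
  from the uniqueness of arcs. The inequality passes to the equivariant Gromov--Hausdorff limit, so
  d(x, g x) \<le> d(x, g^p x) = 0 for every x in I.\<close>

lemma pathin_mtopology_if_Lipschitz:
  assumes MS: "Metric_space T d" and L: "L > 0" and im: "c ` {0..1} \<subseteq> T"
    and lip: "\<And>s t. s \<in> {0..1} \<Longrightarrow> t \<in> {0..1} \<Longrightarrow> d (c s) (c t) \<le> L * \<bar>s - t\<bar>"
  shows "pathin (Metric_space.mtopology T d) c"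
proof -
  interpret M: Metric_space T d by (rule MS)
  show ?thesis
    unfolding pathin_def M.continuous_map_to_metric
  proof (intro ballI allI impI)
    fix x e assume x: "x \<in> topspace (subtopology euclideanreal {0..1})" and e: "(e::real) > 0"
    then have x01: "x \<in> {0..1}" by simp
    let ?U = "{0..1} \<inter> ball x (e / L)"
    have "openin (subtopology euclideanreal {0..1}) ?U"
      by (simp add: openin_subtopology_Int2)
    moreover have "x \<in> ?U" using x01 e L by simp
    moreover have "\<forall>y\<in>?U. c y \<in> M.mball (c x) e"
    proof
      fix y assume "y \<in> ?U"
      then have y01: "y \<in> {0..1}" and "\<bar>x - y\<bar> < e / L" by (auto simp: dist_real_def)
      then have "L * \<bar>x - y\<bar> < e" using L by (simp add: pos_less_divide_eq mult.commute)
      with lip[OF x01 y01] have "d (c x) (c y) < e" by linarith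
      then show "c y \<in> M.mball (c x) e" using im x01 y01 by auto
    qed
    ultimately show "\<exists>U. openin (subtopology euclideanreal {0..1}) U \<and> x \<in> U \<and>
        (\<forall>y\<in>U. c y \<in> M.mball (c x) e)"
      by blast
  qed
qed

lemma is_geodesic_dist:
  assumes "is_geodesic T d x y ga" and "s \<in> {0..d x y}"
  shows "ga s \<in> T" and "d x (ga s) = s" and "d (ga s) y = d x y - s"
proof -
  have ga: "ga 0 = x" "ga (d x y) = y" "\<forall>s\<in>{0..d x y}. \<forall>t\<in>{0..d x y}. d (ga s) (ga t) = \<bar>s - t\<bar>"
    using assms(1) unfolding is_geodesic_def by auto
  have "d (ga 0) (ga s) = \<bar>0 - s\<bar>" "d (ga s) (ga (d x y)) = \<bar>s - d x y\<bar>"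
    using ga(3) assms(2) by auto
  then show "d x (ga s) = s" "d (ga s) y = d x y - s"
    using assms(2) unfolding ga(1,2) by auto
  show "ga s \<in> T" using assms unfolding is_geodesic_def by auto
qed

lemma is_geodesic_image_subset_seg:
  "is_geodesic T d x y ga \<Longrightarrow> ga ` {0..d x y} \<subseteq> seg T d x y"
  using is_geodesic_dist unfolding seg_def by fastforce

lemma R_tree_obtain_geodesic:
  assumes "R_tree T d" and "x \<in> T" and "y \<in> T"
  obtains ga where "is_geodesic T d x y ga"
    and "\<forall>al. is_arc T d x y al \<longrightarrow> al ` {0..1} = ga ` {0..d x y}"
  using assms unfolding R_tree_def by blast

lemma R_tree_Metric_space: "R_tree T d \<Longrightarrow> Metric_space T d"
  by (simp add: R_tree_def)

definition join_path :: "real \<Rightarrow> (real \<Rightarrow> 'a) \<Rightarrow> (real \<Rightarrow> 'a) \<Rightarrow> real \<Rightarrow> 'a" where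
  "join_path p g1 g2 s = (if s \<le> p then g1 s else g2 (s - p))"

context Metric_space
begin

lemma seg_commute: "seg M d x y = seg M d y x"
  unfolding seg_def by (auto simp: commute add.commute)

lemma seg_trans:
  assumes "p \<in> seg M d x q" and "q \<in> seg M d x y" and "x \<in> M" and "y \<in> M"
  shows "p \<in> seg M d x y"
proof -
  have "p \<in> M" "q \<in> M" using assms(1,2) unfolding seg_def by auto
  then have "d p y \<le> d p q + d q y" "d x y \<le> d x p + d p y"
    using triangle assms(3,4) by blast+
  moreover have "d x p + d p q = d x q" "d x q + d q y = d x y"
    using assms(1,2) unfolding seg_def by auto
  ultimately show ?thesis using \<open>p \<in> M\<close> unfolding seg_def by simp
qed

lemma seg_inter_seg_subset:
  assumes "z \<in> seg M d x y" and "x \<in> M" and "y \<in> M"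
  shows "seg M d x z \<inter> seg M d z y \<subseteq> {z}"
proof
  fix v assume v: "v \<in> seg M d x z \<inter> seg M d z y"
  have "v \<in> M" "z \<in> M" using v assms(1) unfolding seg_def by auto
  have "d x v + d v z = d x z" "d z v + d v y = d z y" "d x z + d z y = d x y"
    using v assms(1) unfolding seg_def by auto
  moreover have "d x y \<le> d x v + d v y" using triangle \<open>v \<in> M\<close> assms(2,3) by blast
  ultimately have "d v z = 0" using commute[of v z] nonneg[of v z] by linarith
  then show "v \<in> {z}" using \<open>v \<in> M\<close> \<open>z \<in> M\<close> by simp
qed

lemma unique_arc_image:
  assumes "L > 0" and im: "c ` {0..L} \<subseteq> M" and inj: "inj_on c {0..L}"
    and lip: "\<And>s t. s \<in> {0..L} \<Longrightarrow> t \<in> {0..L} \<Longrightarrow> d (c s) (c t) \<le> \<bar>s - t\<bar>"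
    and uniq: "\<forall>al. is_arc M d (c 0) (c L) al \<longrightarrow> al ` {0..1} = A"
  shows "c ` {0..L} = A"
proof -
  define al where "al = (\<lambda>s. c (L * s))"
  have scale: "(\<lambda>s. L * s) ` {0..1} = {0..L}"
    using \<open>L > 0\<close> by (auto simp: image_iff mult_le_cancel_left1 intro!: bexI[where x = "_ / L"])
  then have al_image: "al ` {0..1} = c ` {0..L}"
    unfolding al_def by (metis image_image)
  have "is_arc M d (c 0) (c L) al"
    unfolding is_arc_def
  proof (intro conjI)
    show "pathin (Metric_space.mtopology M d) al"
    proof (rule pathin_mtopology_if_Lipschitz[OF Metric_space_axioms \<open>L > 0\<close>])
      show "al ` {0..1} \<subseteq> M" using al_image im by simp
      fix s t :: real assume "s \<in> {0..1}" "t \<in> {0..1}"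
      then have "L * s \<in> {0..L}" "L * t \<in> {0..L}" using \<open>L > 0\<close> by (simp_all add: mult_left_le)
      from lip[OF this] show "d (al s) (al t) \<le> L * \<bar>s - t\<bar>"
        using \<open>L > 0\<close> by (simp add: al_def abs_mult flip: right_diff_distrib)
    qed
    show "inj_on al {0..1}"
      using inj \<open>L > 0\<close> scale unfolding al_def inj_on_def by (metis image_eqI mult_cancel_left less_irrefl)
  qed (auto simp: al_def)
  with uniq al_image show ?thesis by simp
qed

lemma join_path_mem:
  assumes "is_geodesic M d x z g1" and "is_geodesic M d z y g2" and "s \<in> {0..d x z + d z y}"
  shows "join_path (d x z) g1 g2 s \<in> M"
  using assms is_geodesic_dist(1)[OF assms(1)] is_geodesic_dist(1)[OF assms(2)]
  unfolding join_path_def by auto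

lemma geodesic_join_across:
  assumes g1: "is_geodesic M d x z g1" and g2: "is_geodesic M d z y g2"
    and meet: "seg M d x z \<inter> seg M d z y \<subseteq> {z}"
    and s: "s \<in> {0..d x z}" and u: "u \<in> {0<..d z y}"
  shows "d (g1 s) (g2 u) \<le> d x z - s + u" and "g1 s \<noteq> g2 u"
proof -
  have u': "u \<in> {0..d z y}" using u by simp
  note d1 = is_geodesic_dist[OF g1 s] and d2 = is_geodesic_dist[OF g2 u']
  have zM: "z \<in> M" using is_geodesic_dist(1)[OF g2, of 0] g2 unfolding is_geodesic_def by simp
  show "d (g1 s) (g2 u) \<le> d x z - s + u" using triangle[OF d1(1) zM d2(1)] d1(3) d2(2) by linarith
  show "g1 s \<noteq> g2 u"
  proof
    assume eq: "g1 s = g2 u"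
    have "g1 s \<in> seg M d x z"
      by (rule subsetD[OF is_geodesic_image_subset_seg[OF g1] imageI[OF s]])
    then have "g2 u \<in> seg M d x z" unfolding eq .
    moreover have "g2 u \<in> seg M d z y"
      by (rule subsetD[OF is_geodesic_image_subset_seg[OF g2] imageI[OF u']])
    ultimately have "g2 u = z" using meet by (blast dest: singletonD)
    then show False using d2(2) zM u by simp
  qed
qed

lemma join_path_ordered:
  assumes g1: "is_geodesic M d x z g1" and g2: "is_geodesic M d z y g2"
    and meet: "seg M d x z \<inter> seg M d z y \<subseteq> {z}"
    and st: "s \<in> {0..d x z + d z y}" "t \<in> {0..d x z + d z y}" "s < t"
  shows "d (join_path (d x z) g1 g2 s) (join_path (d x z) g1 g2 t) \<le> t - s \<and>
    join_path (d x z) g1 g2 s \<noteq> join_path (d x z) g1 g2 t"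
    (is "d (?c s) (?c t) \<le> _ \<and> _")
proof -
  have cM: "?c s \<in> M" "?c t \<in> M" using join_path_mem[OF g1 g2] st(1,2) by auto
  have along: ?thesis if "d (?c s) (?c t) = t - s"
  proof -
    have "0 < d (?c s) (?c t)" using that st(3) by simp
    then have "?c s \<noteq> ?c t" by (rule mdist_pos_eq[OF cM, THEN iffD1])
    then show ?thesis using that by simp
  qed
  consider (first) "t \<le> d x z" | (second) "d x z < s" | (across) "s \<le> d x z" "d x z < t"
    using st(3) by linarith
  then show ?thesis
  proof cases
    case first
    then have "?c s = g1 s" "?c t = g1 t" using st(3) by (simp_all add: join_path_def)
    moreover have "d (g1 s) (g1 t) = t - s" using g1 st first unfolding is_geodesic_def by auto
    ultimately show ?thesis by (intro along) simp
  next
    case second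
    then have "?c s = g2 (s - d x z)" "?c t = g2 (t - d x z)" using st(3) by (simp_all add: join_path_def)
    moreover have "d (g2 (s - d x z)) (g2 (t - d x z)) = t - s"
      using g2 st second unfolding is_geodesic_def by auto
    ultimately show ?thesis by (intro along) simp
  next
    case across
    then have s: "s \<in> {0..d x z}" and u: "t - d x z \<in> {0<..d z y}" using st by auto
    have "?c s = g1 s" "?c t = g2 (t - d x z)" using across by (simp_all add: join_path_def)
    then show ?thesis using geodesic_join_across[OF g1 g2 meet s u] by simp
  qed
qed

lemma geodesic_join:
  assumes g1: "is_geodesic M d x z g1" and g2: "is_geodesic M d z y g2"
    and meet: "seg M d x z \<inter> seg M d z y \<subseteq> {z}"
  obtains c where "c ` {0..d x z + d z y} \<subseteq> M" and "inj_on c {0..d x z + d z y}"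
    and "\<And>s t. s \<in> {0..d x z + d z y} \<Longrightarrow> t \<in> {0..d x z + d z y} \<Longrightarrow> d (c s) (c t) \<le> \<bar>s - t\<bar>"
    and "c 0 = x" and "c (d x z) = z" and "c (d x z + d z y) = y"
proof
  let ?c = "join_path (d x z) g1 g2"
  note ordered = join_path_ordered[OF g1 g2 meet]
  have ends: "g1 0 = x" "g1 (d x z) = z" "g2 0 = z" "g2 (d z y) = y"
    using g1 g2 unfolding is_geodesic_def by auto
  show "?c ` {0..d x z + d z y} \<subseteq> M" using join_path_mem[OF g1 g2] by blast
  show "inj_on ?c {0..d x z + d z y}"
    using ordered by (intro inj_onI) (metis linorder_neq_iff)
  show "d (?c s) (?c t) \<le> \<bar>s - t\<bar>" if "s \<in> {0..d x z + d z y}" "t \<in> {0..d x z + d z y}" for s t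
  proof (cases s t rule: linorder_cases)
    case less then show ?thesis using ordered[of s t] that by simp
  next
    case equal then show ?thesis using join_path_mem[OF g1 g2] that by simp
  next
    case greater then show ?thesis using ordered[of t s] that commute[of "?c s" "?c t"] by simp
  qed
  show "?c 0 = x" "?c (d x z) = z" using ends by (simp_all add: join_path_def)
  show "?c (d x z + d z y) = y"
  proof (cases "d z y = 0")
    case True
    have "z \<in> M" "y \<in> M" using is_geodesic_dist(1)[OF g2] ends(3,4) by (metis atLeastAtMost_iff nonneg order_refl)+
    then show ?thesis using True ends by (simp add: join_path_def)
  next
    case False
    then have "0 < d z y" using nonneg[of z y] by linarith
    then show ?thesis using ends(4) by (simp add: join_path_def)
  qed
qed

end

lemma mem_geodesic_image_if_seg_meet:
  assumes RT: "R_tree T d" and "x \<in> T" and "y \<in> T" and "z \<in> T"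
    and ga: "is_geodesic T d x y ga" and uniq: "\<forall>al. is_arc T d x y al \<longrightarrow> al ` {0..1} = ga ` {0..d x y}"
    and meet: "seg T d x z \<inter> seg T d z y \<subseteq> {z}"
  shows "z \<in> ga ` {0..d x y}"
proof -
  interpret M: Metric_space T d by (rule R_tree_Metric_space[OF RT])
  obtain g1 where g1: "is_geodesic T d x z g1" using R_tree_obtain_geodesic RT \<open>x \<in> T\<close> \<open>z \<in> T\<close> .
  obtain g2 where g2: "is_geodesic T d z y g2" using R_tree_obtain_geodesic RT \<open>z \<in> T\<close> \<open>y \<in> T\<close> .
  obtain c where join: "c ` {0..d x z + d z y} \<subseteq> T" "inj_on c {0..d x z + d z y}"
    "\<And>s t. s \<in> {0..d x z + d z y} \<Longrightarrow> t \<in> {0..d x z + d z y} \<Longrightarrow> d (c s) (c t) \<le> \<bar>s - t\<bar>"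
    "c 0 = x" "c (d x z) = z" "c (d x z + d z y) = y"
    using M.geodesic_join[OF g1 g2 meet] by blast
  show ?thesis
  proof (cases "d x z + d z y = 0")
    case True
    then have "d x z = 0" using M.nonneg[of x z] M.nonneg[of z y] by linarith
    then have "x = z" using \<open>x \<in> T\<close> \<open>z \<in> T\<close> by simp
    moreover have "ga 0 = x" using ga unfolding is_geodesic_def by simp
    moreover have "ga 0 \<in> ga ` {0..d x y}" by simp
    ultimately show ?thesis by (simp only:)
  next
    case False
    then have pos: "d x z + d z y > 0" using M.nonneg[of x z] M.nonneg[of z y] by linarith
    have uniq': "\<forall>al. is_arc T d (c 0) (c (d x z + d z y)) al \<longrightarrow> al ` {0..1} = ga ` {0..d x y}"
      unfolding join(4,6) by (rule uniq)
    have "c ` {0..d x z + d z y} = ga ` {0..d x y}"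
      by (rule M.unique_arc_image[OF pos join(1-3) uniq'])
    moreover have "d x z \<in> {0..d x z + d z y}" by simp
    then have "c (d x z) \<in> c ` {0..d x z + d z y}" by (rule imageI)
    then have "z \<in> c ` {0..d x z + d z y}" unfolding join(5) .
    ultimately show ?thesis by (simp only:)
  qed
qed

lemma seg_eq_geodesic_image:
  assumes RT: "R_tree T d" and "x \<in> T" and "y \<in> T"
    and ga: "is_geodesic T d x y ga" and uniq: "\<forall>al. is_arc T d x y al \<longrightarrow> al ` {0..1} = ga ` {0..d x y}"
  shows "seg T d x y = ga ` {0..d x y}"
proof
  interpret M: Metric_space T d by (rule R_tree_Metric_space[OF RT])
  show "seg T d x y \<subseteq> ga ` {0..d x y}"
  proof
    fix z assume z: "z \<in> seg T d x y"
    then have "z \<in> T" unfolding seg_def by simp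
    moreover have "seg T d x z \<inter> seg T d z y \<subseteq> {z}"
      using M.seg_inter_seg_subset[OF z assms(2,3)] .
    ultimately show "z \<in> ga ` {0..d x y}"
      by (rule mem_geodesic_image_if_seg_meet[OF RT assms(2,3) _ ga uniq])
  qed
  show "ga ` {0..d x y} \<subseteq> seg T d x y" by (rule is_geodesic_image_subset_seg[OF ga])
qed

lemma mem_seg_if_seg_meet:
  assumes RT: "R_tree T d" and "x \<in> T" and "y \<in> T" and "z \<in> T"
    and meet: "seg T d x z \<inter> seg T d z y \<subseteq> {z}"
  shows "z \<in> seg T d x y"
proof -
  obtain ga where ga: "is_geodesic T d x y ga"
    and uniq: "\<forall>al. is_arc T d x y al \<longrightarrow> al ` {0..1} = ga ` {0..d x y}"
    using R_tree_obtain_geodesic RT \<open>x \<in> T\<close> \<open>y \<in> T\<close> .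
  show ?thesis
    using is_geodesic_image_subset_seg[OF ga] mem_geodesic_image_if_seg_meet[OF assms(1-4) ga uniq meet]
    by (rule subsetD)
qed

lemma mem_seg_if_dist_le:
  assumes RT: "R_tree T d" and x: "x \<in> T" and y: "y \<in> T"
    and p: "p \<in> seg T d x y" and q: "q \<in> seg T d x y" and le: "d x p \<le> d x q"
  shows "p \<in> seg T d x q"
proof -
  obtain ga where G: "is_geodesic T d x y ga"
    and U: "\<forall>al. is_arc T d x y al \<longrightarrow> al ` {0..1} = ga ` {0..d x y}"
    using R_tree_obtain_geodesic RT x y .
  have "seg T d x y = ga ` {0..d x y}" by (rule seg_eq_geodesic_image[OF RT x y G U])
  then obtain s t where st: "s \<in> {0..d x y}" "t \<in> {0..d x y}" and pq: "p = ga s" "q = ga t"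
    using p q by auto
  then have "d x p = s" "d x q = t" "d p q = \<bar>s - t\<bar>"
    using is_geodesic_dist(2)[OF G] G unfolding is_geodesic_def by auto
  then show ?thesis using le p unfolding seg_def by auto
qed

lemma Sup_sublevel_mem:
  fixes f :: "real \<Rightarrow> real"
  assumes "0 \<le> a" and "f 0 \<le> c" and "L > 0"
    and lip: "\<And>s t. s \<in> {0..a} \<Longrightarrow> t \<in> {0..a} \<Longrightarrow> f s \<le> f t + L * \<bar>s - t\<bar>"
  shows "Sup {t \<in> {0..a}. f t \<le> c} \<in> {t \<in> {0..a}. f t \<le> c}"
proof -
  define Z where "Z = {t \<in> {0..a}. f t \<le> c}"
  have "0 \<in> Z" using assms(1,2) unfolding Z_def by simp
  then have Z_ne: "Z \<noteq> {}" by blast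
  have Z_bdd: "bdd_above Z" unfolding Z_def by (rule bdd_aboveI[of _ a]) auto
  have Z_le: "t \<le> Sup Z" if "t \<in> Z" for t using that Z_bdd by (rule cSup_upper)
  have Sup: "Sup Z \<in> {0..a}"
    using Z_le[OF \<open>0 \<in> Z\<close>] cSup_least[OF Z_ne, of a] unfolding Z_def by auto
  have "f (Sup Z) \<le> c"
  proof (rule field_le_epsilon)
    fix e :: real assume "0 < e"
    then obtain t where t: "t \<in> Z" "Sup Z - e / L < t"
      using less_cSup_iff[OF Z_ne Z_bdd, of "Sup Z - e / L"] \<open>L > 0\<close> by auto
    then have "L * \<bar>Sup Z - t\<bar> \<le> e"
      using Z_le[OF t(1)] \<open>L > 0\<close> by (simp add: field_simps)
    moreover have "t \<in> {0..a}" "f t \<le> c" using t(1) unfolding Z_def by auto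
    ultimately show "f (Sup Z) \<le> c + e" using lip[OF Sup \<open>t \<in> {0..a}\<close>] by linarith
  qed
  then show ?thesis using Sup unfolding Z_def by simp
qed

lemma seg_inter_farthest:
  assumes RT: "R_tree T d" and x: "x \<in> T" and y: "y \<in> T" and z: "z \<in> T"
  obtains w where "w \<in> seg T d x y" and "w \<in> seg T d x z"
    and "\<And>v. v \<in> seg T d x y \<Longrightarrow> v \<in> seg T d x z \<Longrightarrow> d x v \<le> d x w"
proof -
  interpret M: Metric_space T d by (rule R_tree_Metric_space[OF RT])
  obtain ga where G: "is_geodesic T d x y ga"
    and U: "\<forall>al. is_arc T d x y al \<longrightarrow> al ` {0..1} = ga ` {0..d x y}"
    using R_tree_obtain_geodesic RT x y .
  define a where "a = d x y"
  have seg_xy: "seg T d x y = ga ` {0..a}"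
    unfolding a_def by (rule seg_eq_geodesic_image[OF RT x y G U])
  note ga_dist = is_geodesic_dist[OF G, folded a_def]
  have a0: "0 \<le> a" unfolding a_def by simp
  \<comment> \<open>By the triangle inequality psi t \<ge> d x z, with equality exactly when ga t lies on [x,z].\<close>
  define psi where "psi t = t + d (ga t) z" for t
  have psi_ge: "d x z \<le> psi t" if "t \<in> {0..a}" for t
    using M.triangle[OF x ga_dist(1)[OF that] z] ga_dist(2)[OF that] unfolding psi_def by simp
  have in_seg_iff: "ga t \<in> seg T d x z \<longleftrightarrow> psi t \<le> d x z" if "t \<in> {0..a}" for t
    using psi_ge[OF that] ga_dist(1,2)[OF that] unfolding seg_def psi_def by auto
  have psi_lip: "psi s \<le> psi t + 2 * \<bar>s - t\<bar>" if "s \<in> {0..a}" "t \<in> {0..a}" for s t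
  proof -
    have "d (ga s) z \<le> d (ga s) (ga t) + d (ga t) z"
      using M.triangle ga_dist(1) that z by blast
    moreover have "d (ga s) (ga t) = \<bar>s - t\<bar>" using G that unfolding is_geodesic_def a_def by blast
    ultimately have "psi s \<le> s + \<bar>s - t\<bar> + d (ga t) z" unfolding psi_def by linarith
    also have "\<dots> \<le> psi t + 2 * \<bar>s - t\<bar>" unfolding psi_def by (simp add: abs_if)
    finally show ?thesis .
  qed
  have "psi 0 \<le> d x z" using G unfolding psi_def is_geodesic_def by simp
  define t0 where "t0 = Sup {t \<in> {0..a}. psi t \<le> d x z}"
  have t0: "t0 \<in> {0..a}" "psi t0 \<le> d x z"
    using Sup_sublevel_mem[OF a0 \<open>psi 0 \<le> d x z\<close> _ psi_lip] unfolding t0_def by auto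
  show thesis
  proof (rule that)
    show "ga t0 \<in> seg T d x y" using seg_xy t0 by simp
    show "ga t0 \<in> seg T d x z" using in_seg_iff t0 by simp
    fix v assume "v \<in> seg T d x y" "v \<in> seg T d x z"
    then obtain t where t: "t \<in> {0..a}" "v = ga t" "psi t \<le> d x z" using seg_xy in_seg_iff by auto
    have "t \<le> t0" unfolding t0_def
      by (rule cSup_upper) (use t in \<open>auto intro: bdd_aboveI[of _ a]\<close>)
    then show "d x v \<le> d x (ga t0)" using t t0 ga_dist(2) by simp
  qed
qed

lemma R_tree_tripod:
  assumes RT: "R_tree T d" and x: "x \<in> T" and y: "y \<in> T" and z: "z \<in> T"
  obtains w where "w \<in> seg T d x y" and "w \<in> seg T d x z" and "w \<in> seg T d y z"
proof -
  interpret M: Metric_space T d by (rule R_tree_Metric_space[OF RT])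
  obtain w where wxy: "w \<in> seg T d x y" and wxz: "w \<in> seg T d x z"
    and far: "\<And>v. v \<in> seg T d x y \<Longrightarrow> v \<in> seg T d x z \<Longrightarrow> d x v \<le> d x w"
    using seg_inter_farthest[OF RT x y z] by blast
  have wT: "w \<in> T" using wxy unfolding seg_def by simp
  have "seg T d y w \<inter> seg T d w z \<subseteq> {w}"
  proof
    fix v assume "v \<in> seg T d y w \<inter> seg T d w z"
    then have vyw: "v \<in> seg T d y w" and vwz: "v \<in> seg T d w z" by auto
    then have vT: "v \<in> T" unfolding seg_def by simp
    have dist: "d y v + d v w = d y w" "d w v + d v z = d w z" "d x w + d w z = d x z"
      "d x w + d w y = d x y"
      using vyw vwz wxz wxy unfolding seg_def by auto
    have "d x v \<le> d x w + d w v" "d x z \<le> d x v + d v z" using M.triangle x wT vT z by blast+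
    then have "d x v + d v z = d x z" using dist by linarith
    then have "v \<in> seg T d x z" using vT unfolding seg_def by simp
    have "w \<in> seg T d y x" using wxy M.seg_commute by simp
    then have vyx: "v \<in> seg T d y x" by (rule M.seg_trans[OF vyw _ y x])
    then have "v \<in> seg T d x y" using M.seg_commute by simp
    then have "d x v \<le> d x w" using \<open>v \<in> seg T d x z\<close> by (rule far)
    moreover have "d y v + d v x = d y x" using vyx unfolding seg_def by simp
    ultimately have "d v w \<le> 0"
      using dist M.commute[of x v] M.commute[of x w] M.commute[of w y] M.commute[of y x] by linarith
    then show "v \<in> {w}" using M.nonneg[of v w] vT wT by simp
  qed
  then have "w \<in> seg T d y z" by (rule mem_seg_if_seg_meet[OF RT y z wT])
  with wxy wxz show thesis by (rule that)
qed

lemma R_tree_four_point: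
  assumes RT: "R_tree T d" and r: "r \<in> T" and x: "x \<in> T" and y: "y \<in> T" and z: "z \<in> T"
  shows "min (d r x + d r z - d x z) (d r z + d r y - d z y) \<le> d r x + d r y - d x y"
proof -
  interpret M: Metric_space T d by (rule R_tree_Metric_space[OF RT])
  obtain c1 where c1: "c1 \<in> seg T d r x" "c1 \<in> seg T d r z" "c1 \<in> seg T d x z"
    using R_tree_tripod[OF RT r x z] by blast
  obtain c2 where c2: "c2 \<in> seg T d r y" "c2 \<in> seg T d r z" "c2 \<in> seg T d y z"
    using R_tree_tripod[OF RT r y z] by blast
  have e1: "d r c1 + d c1 x = d r x" "d r c1 + d c1 z = d r z" "d x c1 + d c1 z = d x z" "c1 \<in> T"
    using c1 unfolding seg_def by auto
  have e2: "d r c2 + d c2 y = d r y" "d r c2 + d c2 z = d r z" "d y c2 + d c2 z = d y z" "c2 \<in> T"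
    using c2 unfolding seg_def by auto
  have cm: "d x c1 = d c1 x" "d y c2 = d c2 y" "d z y = d y z" "d x c2 = d c2 x" by (rule M.commute)+
  \<comment> \<open>Whichever of the branch points c1, c2 is closer to r lies on both [r,x] and [r,y].\<close>
  show ?thesis
  proof (cases "d r c1 \<le> d r c2")
    case True
    have "c1 \<in> seg T d r c2" by (rule mem_seg_if_dist_le[OF RT r z c1(2) c2(2) True])
    then have "c1 \<in> seg T d r y" by (rule M.seg_trans[OF _ c2(1) r y])
    then have "d r c1 + d c1 y = d r y" unfolding seg_def by simp
    moreover have "d x y \<le> d x c1 + d c1 y" using M.triangle x y e1(4) by blast
    ultimately show ?thesis using e1 e2 cm by linarith
  next
    case False
    have "c2 \<in> seg T d r c1" by (rule mem_seg_if_dist_le[OF RT r z c2(2) c1(2)]) (use False in simp)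
    then have "c2 \<in> seg T d r x" by (rule M.seg_trans[OF _ c1(1) r x])
    then have "d r c2 + d c2 x = d r x" unfolding seg_def by simp
    moreover have "d x y \<le> d x c2 + d c2 y" using M.triangle x y e2(4) by blast
    ultimately show ?thesis using e1 e2 cm by linarith
  qed
qed

lemma fixpoint_free_isometry_displacement_two_steps:
  assumes RT: "R_tree T d" and maps: "\<And>x. x \<in> T \<Longrightarrow> h x \<in> T"
    and iso: "\<And>x y. x \<in> T \<Longrightarrow> y \<in> T \<Longrightarrow> d (h x) (h y) = d x y"
    and nofix: "\<And>x. x \<in> T \<Longrightarrow> h x \<noteq> x" and z: "z \<in> T"
  shows "d z (h z) < d z (h (h z))"
proof (rule ccontr)
  interpret M: Metric_space T d by (rule R_tree_Metric_space[OF RT])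
  define L where "L = d z (h z)"
  assume "\<not> d z (h z) < d z (h (h z))"
  then have short: "d z (h (h z)) \<le> L" unfolding L_def by simp
  have z1: "h z \<in> T" and z2: "h (h z) \<in> T" using maps z by auto
  obtain ga where G: "is_geodesic T d z (h z) ga" using R_tree_obtain_geodesic RT z z1 .
  \<comment> \<open>The four-point condition then forces the midpoint m of [z, h z] to be fixed by h.\<close>
  have half: "L / 2 \<in> {0..d z (h z)}" unfolding L_def by simp
  define m where "m = ga (L / 2)"
  have m: "m \<in> T" "d z m = L / 2" "d m (h z) = L / 2"
    using is_geodesic_dist[OF G half] unfolding m_def L_def by auto
  have hm: "h m \<in> T" "d (h z) (h m) = L / 2" "d (h m) (h (h z)) = L / 2"
    using maps[OF m(1)] iso[OF z m(1)] iso[OF m(1) z1] m by auto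
  have "d (h z) (h (h z)) = L" using iso[OF z z1] unfolding L_def .
  note cm = M.commute[of "h z" z] M.commute[of "h z" m] M.commute[of m z]
    M.commute[of "h (h z)" "h m"] M.commute[of "h z" "h (h z)"]
  have "d z (h m) \<le> L / 2"
    using R_tree_four_point[OF RT z1 z hm(1) z2] short hm m cm \<open>d (h z) (h (h z)) = L\<close>
    by (simp add: L_def min_le_iff_disj) (elim disjE; linarith)
  then have "d m (h m) \<le> 0"
    using R_tree_four_point[OF RT z1 m(1) hm(1) z] hm m cm
    by (simp add: L_def min_le_iff_disj)
  then show False using nofix[OF m(1)] M.nonneg[of m "h m"] m(1) hm(1) by simp
qed

lemma isometry_orbit_dist:
  assumes maps: "\<And>x. x \<in> T \<Longrightarrow> h x \<in> T"
    and iso: "\<And>x y. x \<in> T \<Longrightarrow> y \<in> T \<Longrightarrow> d (h x) (h y) = d x y"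
    and z: "z \<in> T" and "i \<le> j"
  shows "d ((h ^^ i) z) ((h ^^ j) z) = d z ((h ^^ (j - i)) z)"
proof -
  have orbit: "(h ^^ n) z \<in> T" for n by (induction n) (simp_all add: z maps)
  have "d ((h ^^ i) z) ((h ^^ (i + k)) z) = d z ((h ^^ k) z)" for k
  proof (induction i)
    case 0 show ?case by simp
  next
    case (Suc i)
    have "d ((h ^^ Suc i) z) ((h ^^ (Suc i + k)) z) = d (h ((h ^^ i) z)) (h ((h ^^ (i + k)) z))" by simp
    also have "\<dots> = d z ((h ^^ k) z)" using iso[OF orbit orbit] Suc.IH by simp
    finally show ?case .
  qed
  from this[of "j - i"] show ?thesis using \<open>i \<le> j\<close> by simp
qed

lemma fixpoint_free_isometry_displacement_strict_mono:
  assumes RT: "R_tree T d" and maps: "\<And>x. x \<in> T \<Longrightarrow> h x \<in> T"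
    and iso: "\<And>x y. x \<in> T \<Longrightarrow> y \<in> T \<Longrightarrow> d (h x) (h y) = d x y"
    and nofix: "\<And>x. x \<in> T \<Longrightarrow> h x \<noteq> x" and z: "z \<in> T"
  shows "strict_mono (\<lambda>n. d z ((h ^^ n) z))"
proof -
  interpret M: Metric_space T d by (rule R_tree_Metric_space[OF RT])
  define a where "a n = (h ^^ n) z" for n
  define F where "F n = d z (a n)" for n
  have a: "a n \<in> T" for n unfolding a_def by (induction n) (simp_all add: z maps)
  have a_dist: "d (a i) (a j) = F (j - i)" if "i \<le> j" for i j
    using isometry_orbit_dist[where T = T and h = h and d = d, OF maps iso z that] unfolding a_def F_def .
  have step: "F (n + 1) < F (n + 2) \<and> F 1 \<le> F (n + 1)" for n
  proof (induction n)
    case 0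
    show ?case
      using fixpoint_free_isometry_displacement_two_steps[OF RT maps iso nofix z]
      by (simp add: F_def a_def numeral_2_eq_2)
  next
    case (Suc n)
    have "min (F 1 + F (n + 2) - F (n + 1)) (F (n + 2) + F (n + 3) - F 1) \<le> F 1 + F (n + 3) - F (n + 2)"
      using R_tree_four_point[OF RT a[of 0] a[of 1] a[of "n + 3"] a[of "n + 2"]]
        a_dist[of 0 1] a_dist[of 0 "n + 3"] a_dist[of 1 "n + 3"] a_dist[of 0 "n + 2"]
        a_dist[of 1 "n + 2"] a_dist[of "n + 2" "n + 3"]
      by (simp add: M.commute[of "a (n + 3)" "a (n + 2)"] F_def)
    then have "F (n + 2) < F (n + 3)" using Suc.IH by (auto simp: min_le_iff_disj)
    then show ?case using Suc.IH by (simp add: numeral_2_eq_2 numeral_3_eq_3)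
  qed
  have "F n < F (Suc n)" for n
  proof (cases n)
    case 0
    have "a 1 \<noteq> a 0" using nofix[OF z] by (simp add: a_def)
    then show ?thesis using 0 a[of 0] a[of 1] M.nonneg[of "a 0" "a 1"] by (simp add: F_def a_def le_less)
  next
    case (Suc m)
    then show ?thesis using step[of m] by simp
  qed
  then show ?thesis unfolding strict_mono_Suc_iff F_def a_def by blast
qed

lemma isometric_action_pow:
  assumes grp: "group G" and IA: "isometric_action G T d act" and g: "g \<in> carrier G"
    and x: "x \<in> T"
  shows "act (g [^]\<^bsub>G\<^esub> (n::nat)) x = (act g ^^ n) x"
  using x
proof (induction n arbitrary: x)
  case 0 then show ?case using IA unfolding isometric_action_def by simp
next
  case (Suc n)
  have "g [^]\<^bsub>G\<^esub> n \<in> carrier G" using group.is_monoid[OF grp] g by (rule monoid.nat_pow_closed)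
  moreover have "act g x \<in> T" using IA g Suc.prems unfolding isometric_action_def by blast
  ultimately have "act (g [^]\<^bsub>G\<^esub> Suc n) x = (act g ^^ n) (act g x)"
    using IA g Suc unfolding isometric_action_def by simp
  then show ?case by (simp only: funpow_Suc_right comp_def)
qed

lemma hyperbolic_displacement_le_pow:
  assumes grp: "group G" and RT: "R_tree T d" and IA: "isometric_action G T d act"
    and g: "g \<in> carrier G" and hyp: "hyperbolic T act g" and x: "x \<in> T" and p: "(p::nat) \<ge> 1"
  shows "d x (act g x) \<le> d x (act (g [^]\<^bsub>G\<^esub> p) x)"
proof -
  have maps: "\<And>y. y \<in> T \<Longrightarrow> act g y \<in> T"
    and iso: "\<And>y z. y \<in> T \<Longrightarrow> z \<in> T \<Longrightarrow> d (act g y) (act g z) = d y z"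
    using IA g unfolding isometric_action_def by blast+
  have nofix: "\<And>y. y \<in> T \<Longrightarrow> act g y \<noteq> y" using hyp unfolding hyperbolic_def by blast
  have mono: "strict_mono (\<lambda>n. d x ((act g ^^ n) x))"
    by (rule fixpoint_free_isometry_displacement_strict_mono[OF RT maps iso nofix x])
  have "d x ((act g ^^ 1) x) \<le> d x ((act g ^^ p) x)"
    using strict_mono_less_eq[OF mono, of 1 p] p by (simp only:)
  then show ?thesis using isometric_action_pow[OF grp IA g x, of p] by simp
qed

lemma eqGH_converges_approx_point:
  assumes conv: "eqGH_converges G Tn dn actn T d act" and x: "x \<in> T"
    and P: "finite P" "P \<subseteq> carrier G" and e: "\<epsilon> > 0"
  shows "\<forall>\<^sub>F n in sequentially. \<exists>x'\<in>Tn n. \<forall>g\<in>P. \<forall>h\<in>P.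
           \<bar>d (act g x) (act h x) - dn n (actn n g x') (actn n h x')\<bar> < \<epsilon>"
proof -
  have "\<forall>\<^sub>F n in sequentially. \<exists>Kn R. finite Kn \<and> Kn \<subseteq> Tn n \<and> R \<subseteq> {x} \<times> Kn \<and>
      fst ` R = {x} \<and> snd ` R = Kn \<and>
      (\<forall>(y, y')\<in>R. \<forall>(z, z')\<in>R. \<forall>g\<in>P. \<forall>h\<in>P.
         \<bar>d (act g y) (act h z) - dn n (actn n g y') (actn n h z')\<bar> < \<epsilon>)"
    using conv x P e unfolding eqGH_converges_def by simp
  then show ?thesis
  proof (rule eventually_mono)
    fix n
    assume "\<exists>Kn R. finite Kn \<and> Kn \<subseteq> Tn n \<and> R \<subseteq> {x} \<times> Kn \<and> fst ` R = {x} \<and> snd ` R = Kn \<and>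
      (\<forall>(y, y')\<in>R. \<forall>(z, z')\<in>R. \<forall>g\<in>P. \<forall>h\<in>P.
         \<bar>d (act g y) (act h z) - dn n (actn n g y') (actn n h z')\<bar> < \<epsilon>)"
    then obtain Kn R where R: "Kn \<subseteq> Tn n" "fst ` R = {x}" "snd ` R = Kn"
      and close: "\<forall>(y, y')\<in>R. \<forall>(z, z')\<in>R. \<forall>g\<in>P. \<forall>h\<in>P.
         \<bar>d (act g y) (act h z) - dn n (actn n g y') (actn n h z')\<bar> < \<epsilon>"
      by blast
    obtain x' where "(x, x') \<in> R" using R(2) by force
    moreover have "x' \<in> Tn n" using R(1,3) \<open>(x, x') \<in> R\<close> by force
    ultimately show "\<exists>x'\<in>Tn n. \<forall>g\<in>P. \<forall>h\<in>P.
        \<bar>d (act g x) (act h x) - dn n (actn n g x') (actn n h x')\<bar> < \<epsilon>"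
      using close by fastforce
  qed
qed

lemma eqGH_limit_displacement_le_pow:
  assumes grp: "group G" and conv: "eqGH_converges G Tn dn actn T d act"
    and IA: "isometric_action G T d act"
    and RTn: "\<And>n. R_tree (Tn n) (dn n)" and IAn: "\<And>n. isometric_action G (Tn n) (dn n) (actn n)"
    and g: "g \<in> carrier G" and p: "(p::nat) \<ge> 1" and x: "x \<in> T"
    and hyp: "\<forall>\<^sub>F n in sequentially. hyperbolic (Tn n) (actn n) g"
  shows "d x (act g x) \<le> d x (act (g [^]\<^bsub>G\<^esub> p) x)"
proof (rule field_le_epsilon)
  fix e :: real assume "0 < e"
  have one: "\<one>\<^bsub>G\<^esub> \<in> carrier G" by (rule monoid.one_closed[OF group.is_monoid[OF grp]])
  have gp: "g [^]\<^bsub>G\<^esub> p \<in> carrier G" using group.is_monoid[OF grp] g by (rule monoid.nat_pow_closed)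
  define P where "P = {\<one>\<^bsub>G\<^esub>, g, g [^]\<^bsub>G\<^esub> p}"
  have P: "finite P" "P \<subseteq> carrier G" using one g gp unfolding P_def by auto
  have "\<forall>\<^sub>F n in sequentially. \<exists>x'\<in>Tn n. \<forall>h\<in>P. \<forall>h'\<in>P.
      \<bar>d (act h x) (act h' x) - dn n (actn n h x') (actn n h' x')\<bar> < e / 2"
    by (rule eqGH_converges_approx_point[OF conv x P]) (use \<open>0 < e\<close> in simp)
  from eventually_conj[OF this hyp] obtain n where
    "\<exists>x'\<in>Tn n. \<forall>h\<in>P. \<forall>h'\<in>P. \<bar>d (act h x) (act h' x) - dn n (actn n h x') (actn n h' x')\<bar> < e / 2"
    and hyp_n: "hyperbolic (Tn n) (actn n) g"
    unfolding eventually_sequentially by blast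
  then obtain x' where x': "x' \<in> Tn n"
    and close: "\<And>h h'. h \<in> P \<Longrightarrow> h' \<in> P \<Longrightarrow>
      \<bar>d (act h x) (act h' x) - dn n (actn n h x') (actn n h' x')\<bar> < e / 2"
    by blast
  have "act \<one>\<^bsub>G\<^esub> x = x" using IA x unfolding isometric_action_def by blast
  moreover have "actn n \<one>\<^bsub>G\<^esub> x' = x'" using IAn[of n] x' unfolding isometric_action_def by blast
  moreover have "\<one>\<^bsub>G\<^esub> \<in> P" "g \<in> P" "g [^]\<^bsub>G\<^esub> p \<in> P" unfolding P_def by simp_all
  ultimately have "\<bar>d x (act g x) - dn n x' (actn n g x')\<bar> < e / 2"
    "\<bar>d x (act (g [^]\<^bsub>G\<^esub> p) x) - dn n x' (actn n (g [^]\<^bsub>G\<^esub> p) x')\<bar> < e / 2"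
    using close[of "\<one>\<^bsub>G\<^esub>" g] close[of "\<one>\<^bsub>G\<^esub>" "g [^]\<^bsub>G\<^esub> p"] by simp_all
  moreover have "dn n x' (actn n g x') \<le> dn n x' (actn n (g [^]\<^bsub>G\<^esub> p) x')"
    by (rule hyperbolic_displacement_le_pow[OF grp RTn IAn g hyp_n x' p])
  ultimately show "d x (act g x) \<le> d x (act (g [^]\<^bsub>G\<^esub> p) x) + e" by linarith
qed

theorem lemma2p3:
  fixes G :: "('g, 'm) monoid_scheme"
    and k N :: nat and Gs :: "nat \<Rightarrow> 'g set" and xs :: "nat \<Rightarrow> 'g"
    and T :: "'a set" and d :: "'a \<Rightarrow> 'a \<Rightarrow> real" and act :: "'g \<Rightarrow> 'a \<Rightarrow> 'a"
    and Tn :: "nat \<Rightarrow> 'b set" and dn :: "nat \<Rightarrow> 'b \<Rightarrow> 'b \<Rightarrow> real" and actn :: "nat \<Rightarrow> 'g \<Rightarrow> 'b \<Rightarrow> 'b"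
    and g :: 'g and p :: nat and a b :: 'a
  assumes "free_product_decomp G k Gs N xs"
    and "countable (carrier G)"
    and "GF_tree G k Gs T d act" and "minimal_action G T d act"
    and "\<And>n. GF_tree G k Gs (Tn n) (dn n) (actn n)"
    and "\<And>n. minimal_action G (Tn n) (dn n) (actn n)"
    and "eqGH_converges G Tn dn actn T d act"
    and "g \<in> carrier G" and "p \<ge> 1"
    and "a \<in> T" and "b \<in> T" and "a \<noteq> b"
    and "\<forall>x\<in>seg T d a b. act (g [^]\<^bsub>G\<^esub> p) x = x"
    and "\<forall>\<^sub>F n in sequentially. hyperbolic (Tn n) (actn n) g"
  shows "\<forall>x\<in>seg T d a b. act g x = x"
proof
  fix x assume x: "x \<in> seg T d a b"
  have grp: "group G" using assms(1) unfolding free_product_decomp_def by blast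
  have RT: "R_tree T d" and IA: "isometric_action G T d act" using assms(3) unfolding GF_tree_def by auto
  have RTn: "\<And>n. R_tree (Tn n) (dn n)" and IAn: "\<And>n. isometric_action G (Tn n) (dn n) (actn n)"
    using assms(5) unfolding GF_tree_def by auto
  interpret M: Metric_space T d by (rule R_tree_Metric_space[OF RT])
  have xT: "x \<in> T" using x unfolding seg_def by simp
  have gx: "act g x \<in> T" using IA assms(8) xT unfolding isometric_action_def by blast
  have "d x (act g x) \<le> d x (act (g [^]\<^bsub>G\<^esub> p) x)"
    by (rule eqGH_limit_displacement_le_pow[OF grp assms(7) IA RTn IAn assms(8,9) xT assms(14)])
  also have "\<dots> = 0" using assms(13) x xT by simp
  finally show "act g x = x" using M.nonneg[of x "act g x"] xT gx by simp
qed

end
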